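(* Let $n\ge 2$ and $1\le \ell\le n-1$. Let $\mathbf{x}=(x_1,\dots,x_n)$ satisfy $x_1\le\dots\le x_\ell<0\le x_{\ell+1}\le\dots\le x_n$, and let $M=\mathbf{x}^T\mathbf{x}$, with pairwise distinct off-diagonal entries. Then for all $t\in[0,1]$, $\beta_1(t)\le(\ell-1)(n-\ell-1)$, with equality when $G_t(M)$ is the complete bipartite graph $K_{\ell,n-\ell}$ (with parts $\{1,\dots,\ell\}$ and $\{\ell+1,\dots,n\}$). Moreover $\beta_k(t)=0$ for all $k>1$ and all $t\in[0,1]$.
   Context: Betti curves of a symmetric matrix. Let $M$ be a real symmetric $n\times n$ matrix whose $\binom{n}{2}$ off-diagonal entries $M_{ij}$ ($i<j$) are pairwise distinct. The ordering matrix $\widehat{M}$ is defined by $\widehat{M}_{ij}=k$ if $M_{ij}$ is the $k$-th smallest off-diagonal entry. For $t\in[0,1]$, $G_t=G_t(M)$ is the graph on vertex set $\{1,\dots,n\}$ with edge set $\{\{i,j\} : \widehat{M}_{ij}\le t\binom{n}{2}\}$ (so edges are added in increasing order of the entries $M_{ij}$; $G_0$ has no edges and $G_1$ is complete). $X(G_t)$ is the clique complex of $G_t$ (every $k$-clique of $G_t$ is filled in by a $(k-1)$-dimensional simplex). The $i$-th Betti curve of $M$ is $\beta_i(t)=\operatorname{rank} H_i(X(G_t);\mathbf{k})$, with $H_i$ simplicial homology with coefficients in a fixed field $\mathbf{k}$. Here $\mathbf{x}$ is a row vector, so $\mathbf{x}^T\mathbf{x}$ is the $n\times n$ matrix with entries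 $x_ix_j$. *)

theory Defs
  imports Complex_Main "HOL-Library.Function_Algebras"
begin

text \<open>Symmetric matrices are represented as functions nat => nat => real, indexed by 1..n.\<close>

definition offdiag_distinct :: "(nat \<Rightarrow> nat \<Rightarrow> real) \<Rightarrow> nat \<Rightarrow> bool" where
  "offdiag_distinct M n = (\<forall>a b c d. 1 \<le> a \<and> a < b \<and> b \<le> n \<and> 1 \<le> c \<and> c < d \<and> d \<le> n
      \<and> (a, b) \<noteq> (c, d) \<longrightarrow> M a b \<noteq> M c d)"

definition ord_mat :: "(nat \<Rightarrow> nat \<Rightarrow> real) \<Rightarrow> nat \<Rightarrow> nat \<Rightarrow> nat \<Rightarrow> nat" where
  "ord_mat M n i j = card {(a, b). 1 \<le> a \<and> a < b \<and> b \<le> n \<and> M a b \<le> M i j}"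

definition Gt_edge :: "(nat \<Rightarrow> nat \<Rightarrow> real) \<Rightarrow> nat \<Rightarrow> real \<Rightarrow> nat \<Rightarrow> nat \<Rightarrow> bool" where
  "Gt_edge M n t i j = (i \<in> {1..n} \<and> j \<in> {1..n} \<and> i \<noteq> j \<and>
      real (ord_mat M n i j) \<le> t * real (n choose 2))"

definition simplices :: "(nat \<Rightarrow> nat \<Rightarrow> bool) \<Rightarrow> nat set \<Rightarrow> nat \<Rightarrow> nat set set" where
  "simplices E V k = {\<sigma>. \<sigma> \<subseteq> V \<and> card \<sigma> = Suc k \<and> (\<forall>a\<in>\<sigma>. \<forall>b\<in>\<sigma>. a \<noteq> b \<longrightarrow> E a b)}"

text \<open>Simplicial k-chains with coefficients in a field: functions supported on k-simplices
  (simplices oriented by the natural order of their vertices).\<close>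
definition chains :: "(nat \<Rightarrow> nat \<Rightarrow> bool) \<Rightarrow> nat set \<Rightarrow> nat \<Rightarrow> (nat set \<Rightarrow> 'k::field) set" where
  "chains E V k = {f. \<forall>\<sigma>. \<sigma> \<notin> simplices E V k \<longrightarrow> f \<sigma> = 0}"

text \<open>Boundary map from (k+1)-chains to k-chains:
  d[v_0..v_{k+1}] = sum_j (-1)^j [v_0..^v_j..v_{k+1}].\<close>
definition bdry :: "(nat \<Rightarrow> nat \<Rightarrow> bool) \<Rightarrow> nat set \<Rightarrow> nat \<Rightarrow> (nat set \<Rightarrow> 'k::field) \<Rightarrow> nat set \<Rightarrow> 'k" where
  "bdry E V k f \<tau> = (if \<tau> \<in> simplices E V k then
      (\<Sum>\<sigma>\<in>{\<sigma> \<in> simplices E V (Suc k). \<tau> \<subseteq> \<sigma>}.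
          (-1) ^ card {v \<in> \<sigma>. v < the_elem (\<sigma> - \<tau>)} * f \<sigma>)
    else 0)"

definition cycles :: "(nat \<Rightarrow> nat \<Rightarrow> bool) \<Rightarrow> nat set \<Rightarrow> nat \<Rightarrow> (nat set \<Rightarrow> 'k::field) set" where
  "cycles E V k = (case k of 0 \<Rightarrow> chains E V 0
     | Suc j \<Rightarrow> {f \<in> chains E V (Suc j). bdry E V j f = (\<lambda>_. 0)})"

definition boundaries :: "(nat \<Rightarrow> nat \<Rightarrow> bool) \<Rightarrow> nat set \<Rightarrow> nat \<Rightarrow> (nat set \<Rightarrow> 'k::field) set" where
  "boundaries E V k = bdry E V k ` chains E V (Suc k)"

definition chain_scale :: "'k::field \<Rightarrow> (nat set \<Rightarrow> 'k) \<Rightarrow> nat set \<Rightarrow> 'k" where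
  "chain_scale c f = (\<lambda>x. c * f x)"

definition betti :: "'k::field itself \<Rightarrow> (nat \<Rightarrow> nat \<Rightarrow> bool) \<Rightarrow> nat set \<Rightarrow> nat \<Rightarrow> nat" where
  "betti _ E V k = vector_space.dim (chain_scale :: 'k \<Rightarrow> _) (cycles E V k :: (nat set \<Rightarrow> 'k) set)
     - vector_space.dim (chain_scale :: 'k \<Rightarrow> _) (boundaries E V k :: (nat set \<Rightarrow> 'k) set)"

definition betti_curve :: "'k::field itself \<Rightarrow> (nat \<Rightarrow> nat \<Rightarrow> real) \<Rightarrow> nat \<Rightarrow> nat \<Rightarrow> real \<Rightarrow> nat" where
  "betti_curve K M n k t = betti K (Gt_edge M n t) {1..n} k"

end

theory Submission
  imports Defs
begin

(* For M = x^T x the entry M i j = x i * x j is nonpositive on cross pairs (i <= l < j) and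
   nonnegative on pairs from the same side, so all cross edges enter G_t before any same-side edge;
   within the sides, monotonicity of x decides the order.

   Hence once G_t contains a triangle it contains all cross edges, and every simplex of dimension
   at least 2 has two vertices on one side and lies in the star of l or of l+1.  These two vertices
   are adjacent, so coning off from them shows that every cycle of degree at least 2 bounds.

   In degree 1, the same-side edges of a cycle z are coned off from n (negative side) and from 1
   (positive side).  What remains is a cycle on the cross edges; subtracting the 4-cycles
   1 - j - i - n for the cross edges {i,j} with 2 <= i <= l < j < n leaves a cycle supported on
   the tree of edges at 1 and n, which must vanish.  So these at most (l-1)(n-l-1) squares span
   the first homology; for K_{l,n-l} there are no triangles and the squares are independent. *)

interpretation chain_space: vector_space "chain_scale :: 'k::field \<Rightarrow> (nat set \<Rightarrow> 'k) \<Rightarrow> _"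
  by unfold_locales (auto simp: chain_scale_def fun_eq_iff algebra_simps)

lemma sum_fun_apply: "(sum f A) x = (\<Sum>a\<in>A. f a x)"
  by (induct A rule: infinite_finite_induct) auto

lemma sum_eq_single:
  assumes "finite A" "\<And>w. w \<in> A \<Longrightarrow> w \<noteq> v \<Longrightarrow> g w = 0"
  shows "sum g A = (if v \<in> A then g v else (0::'a::comm_monoid_add))"
  using assms by (cases "v \<in> A") (auto simp: sum.remove intro!: sum.neutral)

lemma sum_offdiag_antisym:
  fixes F :: "'a \<Rightarrow> 'a \<Rightarrow> 'b::ab_group_add"
  assumes "finite A" and "\<And>w u. w \<in> A \<Longrightarrow> u \<in> A \<Longrightarrow> w \<noteq> u \<Longrightarrow> F w u = - F u w"
  shows "(\<Sum>w\<in>A. \<Sum>u\<in>A - {w}. F w u) = 0"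
  using assms
proof (induction A rule: finite_induct)
  case (insert a A)
  have "(\<Sum>w\<in>insert a A. \<Sum>u\<in>insert a A - {w}. F w u)
      = (\<Sum>u\<in>A. F a u) + (\<Sum>w\<in>A. F w a + (\<Sum>u\<in>A - {w}. F w u))"
    using insert.hyps by (auto simp: insert_Diff_if intro!: sum.cong)
  also have "\<dots> = (\<Sum>u\<in>A. F a u + F u a) + (\<Sum>w\<in>A. \<Sum>u\<in>A - {w}. F w u)"
    by (simp add: sum.distrib algebra_simps)
  also have "\<dots> = 0"
  proof -
    have "F a u = - F u a" if "u \<in> A" for u
      using that insert.hyps(2) by (intro insert.prems) auto
    moreover have "(\<Sum>w\<in>A. \<Sum>u\<in>A - {w}. F w u) = 0"
      using insert.IH insert.prems by blast
    ultimately show ?thesis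
      by simp
  qed
  finally show ?case .
qed simp

lemma two_le_card_filter_or_filter_not:
  assumes "finite \<sigma>" "3 \<le> card \<sigma>"
  shows "2 \<le> card {x\<in>\<sigma>. P x} \<or> 2 \<le> card {x\<in>\<sigma>. \<not> P x}"
proof -
  have "card \<sigma> = card ({x\<in>\<sigma>. P x} \<union> {x\<in>\<sigma>. \<not> P x})"
    by (rule arg_cong[where f = card]) auto
  also have "\<dots> = card {x\<in>\<sigma>. P x} + card {x\<in>\<sigma>. \<not> P x}"
    using assms(1) by (intro card_Un_disjoint) auto
  finally show ?thesis
    using assms(2) by linarith
qed

lemma exists_other_if_two_le_card:
  assumes "2 \<le> card B" "y \<in> B"
  obtains y' where "y' \<in> B" "y' \<noteq> y"
  using assms card_mono[of "{y}" B] by force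

lemma exists_two_if_two_le_card:
  assumes "2 \<le> card B"
  obtains a b where "a \<in> B" "b \<in> B" "a \<noteq> b"
proof -
  have "B \<noteq> {}"
    using assms by (intro notI) simp
  then obtain a where "a \<in> B"
    by blast
  with assms that show ?thesis
    by (metis exists_other_if_two_le_card)
qed

context vector_space
begin

lemma dim_le_dim_add_card:
  assumes "B \<subseteq> span T" "finite T" "A \<subseteq> span (B \<union> S)" "finite S"
  shows "dim A \<le> dim B + card S"
proof -
  obtain b where b: "b \<subseteq> B" "independent b" "B \<subseteq> span b" "card b = dim B"
    by (rule basis_exists)
  have "finite b"
    using independent_span_bound[OF \<open>finite T\<close> \<open>independent b\<close>] b(1) assms(1) by blast
  have "B \<union> S \<subseteq> span (b \<union> S)"
    using b(3) span_mono[of b "b \<union> S"] span_superset[of "b \<union> S"] by blast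
  then have "A \<subseteq> span (b \<union> S)"
    using assms(3) span_minimal[OF _ subspace_span] by blast
  then have "dim A \<le> card (b \<union> S)"
    using \<open>finite b\<close> \<open>finite S\<close> by (intro dim_le_card) auto
  also have "\<dots> \<le> card b + card S"
    by (rule card_Un_le)
  finally show ?thesis
    using b(4) by simp
qed

lemma card_le_dim_if_independent:
  assumes "A \<subseteq> span T" "finite T" "S \<subseteq> A" "independent S"
  shows "card S \<le> dim A"
proof -
  obtain b where b: "S \<subseteq> b" "b \<subseteq> A" "independent b" "A \<subseteq> span b"
    using maximal_independent_subset_extend[OF assms(3,4)] by blast
  have "finite b"
    using independent_span_bound[OF \<open>finite T\<close> \<open>independent b\<close>] b(2) assms(1) by blast
  with b show ?thesis
    using basis_card_eq_dim[OF b(2,4,3)] card_mono by fastforce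
qed

end

section \<open>Simplicial chains of a clique complex\<close>

definition insert_sign :: "nat set \<Rightarrow> nat \<Rightarrow> 'k::field" where
  "insert_sign \<tau> w = (-1) ^ card {u\<in>\<tau>. u < w}"

lemma insert_sign_mult_self [simp]: "insert_sign \<tau> w * insert_sign \<tau> w = (1::'k::field)"
  by (simp add: insert_sign_def flip: power_add mult_2)

lemma insert_sign_nonzero [simp]: "insert_sign \<tau> w \<noteq> (0::'k::field)"
  by (simp add: insert_sign_def)

lemma insert_sign_insert:
  assumes "finite \<tau>" "x \<notin> \<tau>"
  shows "insert_sign (insert x \<tau>) w = (if x < w then -1 else 1) * (insert_sign \<tau> w :: 'k::field)"
proof -
  have "{u\<in>insert x \<tau>. u < w} = (if x < w then insert x {u\<in>\<tau>. u < w} else {u\<in>\<tau>. u < w})"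
    by auto
  then show ?thesis
    using assms by (simp add: insert_sign_def)
qed

lemma insert_sign_singleton: "insert_sign {a} b = (if a < b then -1 else (1 :: 'k::field))"
proof -
  have "{u\<in>{a}. u < b} = (if a < b then {a} else {})"
    by auto
  then show ?thesis
    by (simp add: insert_sign_def)
qed

lemma bdry_eq_sum_insert:
  fixes f :: "nat set \<Rightarrow> 'k::field"
  assumes V: "finite V" and "\<tau> \<subseteq> V" "card \<tau> = Suc k" and f: "f \<in> chains E V (Suc k)"
  shows "bdry E V k f \<tau> = (\<Sum>w\<in>V - \<tau>. insert_sign \<tau> w * f (insert w \<tau>))"
proof (cases "\<tau> \<in> simplices E V k")
  case False
  have "insert w \<tau> \<notin> simplices E V (Suc k)" for w
    using False assms finite_subset[of \<tau> V] by (auto simp: simplices_def)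
  then have "f (insert w \<tau>) = 0" for w
    using f by (simp add: chains_def)
  with False show ?thesis
    by (simp add: bdry_def)
next
  case True
  have "finite \<tau>"
    using assms finite_subset by blast
  let ?W = "{w\<in>V - \<tau>. insert w \<tau> \<in> simplices E V (Suc k)}"
  have cofaces: "{\<sigma> \<in> simplices E V (Suc k). \<tau> \<subseteq> \<sigma>} = (\<lambda>w. insert w \<tau>) ` ?W"
  proof (intro equalityI subsetI)
    fix \<sigma> assume \<sigma>: "\<sigma> \<in> {\<sigma> \<in> simplices E V (Suc k). \<tau> \<subseteq> \<sigma>}"
    then have "finite \<sigma>" "\<tau> \<subseteq> \<sigma>" "\<sigma> \<subseteq> V" "card \<sigma> = Suc (Suc k)"
      using V finite_subset by (auto simp: simplices_def)
    then have "card (\<sigma> - \<tau>) = 1"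
      using assms \<open>finite \<tau>\<close> by (simp add: card_Diff_subset)
    then obtain w where w: "\<sigma> - \<tau> = {w}"
      by (auto simp: card_Suc_eq)
    then have "\<sigma> = insert w \<tau>"
      using \<open>\<tau> \<subseteq> \<sigma>\<close> by auto
    then show "\<sigma> \<in> (\<lambda>w. insert w \<tau>) ` ?W"
      using \<sigma> w \<open>\<sigma> \<subseteq> V\<close> by auto
  qed auto
  have "inj_on (\<lambda>w. insert w \<tau>) ?W"
    by (rule inj_onI) (metis Diff_iff insert_Diff1 insert_absorb2 insert_iff mem_Collect_eq singleton_insert_inj_eq)
  moreover have "{v \<in> insert w \<tau>. v < the_elem (insert w \<tau> - \<tau>)} = {v\<in>\<tau>. v < w}" if "w \<notin> \<tau>" for w
  proof -
    have "insert w \<tau> - \<tau> = {w}"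
      using that by auto
    then show ?thesis
      by auto
  qed
  ultimately have "bdry E V k f \<tau> = (\<Sum>w\<in>?W. insert_sign \<tau> w * f (insert w \<tau>))"
    using True by (simp add: bdry_def cofaces sum.reindex insert_sign_def)
  also have "\<dots> = (\<Sum>w\<in>V - \<tau>. insert_sign \<tau> w * f (insert w \<tau>))"
    using V f by (intro sum.mono_neutral_left) (auto simp: chains_def)
  finally show ?thesis .
qed

lemma bdry_in_chains: "bdry E V k f \<in> chains E V k"
  by (simp add: chains_def bdry_def)

lemma bdry_add: "bdry E V k (f + g) = bdry E V k f + bdry E V k (g :: nat set \<Rightarrow> 'k::field)"
  by (simp add: fun_eq_iff bdry_def sum.distrib algebra_simps)

lemma bdry_diff: "bdry E V k (f - g) = bdry E V k f - bdry E V k (g :: nat set \<Rightarrow> 'k::field)"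
  by (simp add: fun_eq_iff bdry_def sum_subtractf algebra_simps)

lemma bdry_scale: "bdry E V k (chain_scale c f) = chain_scale c (bdry E V k (f :: nat set \<Rightarrow> 'k::field))"
  by (simp add: fun_eq_iff bdry_def chain_scale_def sum_distrib_left algebra_simps)

lemma bdry_zero [simp]: "bdry E V k (0 :: nat set \<Rightarrow> 'k::field) = 0"
  by (simp add: fun_eq_iff bdry_def)

lemma bdry_sum: "bdry E V k (\<Sum>a\<in>A. F a) = (\<Sum>a\<in>A. bdry E V k (F a :: nat set \<Rightarrow> 'k::field))"
proof (induction A rule: infinite_finite_induct)
  case (insert a A)
  then show ?case by (simp only: sum.insert[OF insert.hyps] bdry_add insert.IH)
next
  case (infinite A)
  then show ?case by (simp only: sum.infinite[OF infinite] bdry_zero)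
qed (simp only: sum.empty bdry_zero)

lemma bdry_nonzero_imp_coface:
  fixes f :: "nat set \<Rightarrow> 'k::field"
  assumes V: "finite V" and f: "f \<in> chains E V (Suc k)" and nz: "bdry E V k f \<tau> \<noteq> 0"
  obtains w where "w \<notin> \<tau>" "f (insert w \<tau>) \<noteq> 0"
proof -
  have "\<tau> \<in> simplices E V k"
    using nz by (auto simp: bdry_def split: if_splits)
  then have "bdry E V k f \<tau> = (\<Sum>w\<in>V - \<tau>. insert_sign \<tau> w * f (insert w \<tau>))"
    by (intro bdry_eq_sum_insert[OF V _ _ f]) (auto simp: simplices_def)
  with nz obtain w where "w \<in> V - \<tau>" "f (insert w \<tau>) \<noteq> 0"
    by (metis (no_types, lifting) mult_zero_right sum.neutral)
  then show ?thesis
    using that by blast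
qed

lemma chains_add: "f \<in> chains E V k \<Longrightarrow> g \<in> chains E V k \<Longrightarrow> f + g \<in> chains E V k"
  by (simp add: chains_def)

lemma chains_diff: "f \<in> chains E V k \<Longrightarrow> g \<in> chains E V k \<Longrightarrow> f - g \<in> chains E V k"
  by (simp add: chains_def)

lemma chains_scale: "f \<in> chains E V k \<Longrightarrow> chain_scale c f \<in> chains E V k"
  by (simp add: chains_def chain_scale_def)

lemma chains_sum: "(\<And>a. a \<in> A \<Longrightarrow> F a \<in> chains E V k) \<Longrightarrow> (\<Sum>a\<in>A. F a) \<in> chains E V k"
  by (induction A rule: infinite_finite_induct) (simp_all add: chains_def)

lemma mem_cycles_Suc: "f \<in> cycles E V (Suc k) \<longleftrightarrow> f \<in> chains E V (Suc k) \<and> bdry E V k f = 0"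
  by (simp add: cycles_def fun_eq_iff)

lemma bdry_bdry:
  fixes f :: "nat set \<Rightarrow> 'k::field"
  assumes V: "finite V" and f: "f \<in> chains E V (Suc (Suc k))"
  shows "bdry E V k (bdry E V (Suc k) f) = 0"
proof
  fix \<tau>
  show "bdry E V k (bdry E V (Suc k) f) \<tau> = 0 \<tau>"
  proof (cases "\<tau> \<in> simplices E V k")
    case False
    then show ?thesis by (simp add: bdry_def)
  next
    case True
    then have \<tau>: "\<tau> \<subseteq> V" "card \<tau> = Suc k" "finite \<tau>"
      using V finite_subset by (auto simp: simplices_def)
    let ?F = "\<lambda>w u. insert_sign \<tau> w * (insert_sign (insert w \<tau>) u * f (insert u (insert w \<tau>)))"
    have "bdry E V (Suc k) f (insert w \<tau>) = (\<Sum>u\<in>(V - \<tau>) - {w}. insert_sign (insert w \<tau>) u * f (insert u (insert w \<tau>)))"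
      if "w \<in> V - \<tau>" for w
    proof -
      have "V - insert w \<tau> = (V - \<tau>) - {w}"
        by auto
      then show ?thesis
        using that \<tau> by (subst bdry_eq_sum_insert[OF V _ _ f]) auto
    qed
    then have "bdry E V k (bdry E V (Suc k) f) \<tau> = (\<Sum>w\<in>V - \<tau>. \<Sum>u\<in>(V - \<tau>) - {w}. ?F w u)"
      by (simp add: bdry_eq_sum_insert[OF V \<tau>(1,2) bdry_in_chains] sum_distrib_left)
    also have "\<dots> = 0"
    proof (rule sum_offdiag_antisym)
      fix w u assume "w \<in> V - \<tau>" "u \<in> V - \<tau>" "w \<noteq> u"
      then show "?F w u = - ?F u w"
        using \<tau> by (cases "w < u") (auto simp: insert_sign_insert insert_commute)
    qed (use V in simp)
    finally show ?thesis by simp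
  qed
qed

lemma cycles_scale: "f \<in> cycles E V k \<Longrightarrow> chain_scale c f \<in> cycles E V k"
  by (cases k) (simp add: cycles_def chains_scale, simp add: mem_cycles_Suc chains_scale bdry_scale chain_space.scale_zero_right)

lemma cycles_sum: "(\<And>a. a \<in> A \<Longrightarrow> F a \<in> cycles E V k) \<Longrightarrow> (\<Sum>a\<in>A. F a) \<in> cycles E V k"
  by (cases k) (auto simp: mem_cycles_Suc cycles_def bdry_sum intro!: chains_sum sum.neutral)

definition unit_chain :: "nat set \<Rightarrow> nat set \<Rightarrow> 'k::field" where
  "unit_chain \<sigma> = (\<lambda>\<rho>. if \<rho> = \<sigma> then 1 else 0)"

lemma unit_chain_in_chains: "\<sigma> \<in> simplices E V k \<Longrightarrow> unit_chain \<sigma> \<in> chains E V k"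
  by (simp add: chains_def unit_chain_def)

lemma finite_simplices: "finite V \<Longrightarrow> finite (simplices E V k)"
  by (rule finite_subset[of _ "Pow V"]) (auto simp: simplices_def)

lemma chains_subset_span_unit_chains:
  assumes "finite V"
  shows "chains E V k \<subseteq> chain_space.span ((unit_chain :: _ \<Rightarrow> _ \<Rightarrow> 'k::field) ` simplices E V k)"
proof
  fix f :: "nat set \<Rightarrow> 'k" assume f: "f \<in> chains E V k"
  have "f = (\<Sum>\<sigma>\<in>simplices E V k. chain_scale (f \<sigma>) (unit_chain \<sigma>))"
    using f finite_simplices[OF assms]
    by (auto simp: fun_eq_iff sum_fun_apply chain_scale_def unit_chain_def chains_def if_distrib cong: if_cong)
  also have "\<dots> \<in> chain_space.span (unit_chain ` simplices E V k)"
    by (intro chain_space.span_sum chain_space.span_scale chain_space.span_base) auto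
  finally show "f \<in> chain_space.span (unit_chain ` simplices E V k)" .
qed

lemma cycles_subset_chains: "cycles E V k \<subseteq> chains E V k"
  by (auto simp: cycles_def split: nat.splits)

lemma boundaries_subset_chains: "boundaries E V k \<subseteq> chains E V k"
  by (auto simp: boundaries_def bdry_in_chains)

lemma betti_le_card:
  fixes S :: "(nat set \<Rightarrow> 'k::field) set"
  assumes "finite V" "finite S" "cycles E V k \<subseteq> chain_space.span (boundaries E V k \<union> S)"
  shows "betti (K :: 'k itself) E V k \<le> card S"
proof -
  have "chain_space.dim (cycles E V k :: (nat set \<Rightarrow> 'k) set) \<le> chain_space.dim (boundaries E V k :: (nat set \<Rightarrow> 'k) set) + card S"
  proof (rule chain_space.dim_le_dim_add_card[OF _ _ assms(3,2)])
    show "boundaries E V k \<subseteq> chain_space.span (unit_chain ` simplices E V k)"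
      using boundaries_subset_chains chains_subset_span_unit_chains[OF assms(1)] by blast
  qed (simp add: finite_simplices assms(1))
  then show ?thesis
    by (simp add: betti_def)
qed

lemma betti_ge_card:
  fixes S :: "(nat set \<Rightarrow> 'k::field) set"
  assumes "finite V" "(boundaries E V k :: (nat set \<Rightarrow> 'k) set) \<subseteq> {0}" "S \<subseteq> cycles E V k"
    and "chain_space.independent S"
  shows "card S \<le> betti (K :: 'k itself) E V k"
proof -
  have "boundaries E V k \<subseteq> chain_space.span ({} :: (nat set \<Rightarrow> 'k) set)"
    using assms(2) by (simp add: chain_space.span_empty)
  then have "chain_space.dim (boundaries E V k :: (nat set \<Rightarrow> 'k) set) \<le> card ({} :: (nat set \<Rightarrow> 'k) set)"
    by (rule chain_space.dim_le_card) simp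
  moreover have "card S \<le> chain_space.dim (cycles E V k :: (nat set \<Rightarrow> 'k) set)"
  proof (rule chain_space.card_le_dim_if_independent[OF _ _ assms(3,4)])
    show "cycles E V k \<subseteq> chain_space.span (unit_chain ` simplices E V k)"
      using cycles_subset_chains chains_subset_span_unit_chains[OF assms(1)] by blast
  qed (simp add: finite_simplices assms(1))
  ultimately show ?thesis
    by (simp add: betti_def)
qed

section \<open>Cones\<close>

definition in_star :: "(nat \<Rightarrow> nat \<Rightarrow> bool) \<Rightarrow> nat set \<Rightarrow> nat \<Rightarrow> nat set \<Rightarrow> bool" where
  "in_star E V v \<sigma> \<longleftrightarrow> insert v \<sigma> \<subseteq> V \<and> (\<forall>a\<in>insert v \<sigma>. \<forall>b\<in>insert v \<sigma>. a \<noteq> b \<longrightarrow> E a b)"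

definition cone :: "(nat \<Rightarrow> nat \<Rightarrow> bool) \<Rightarrow> nat set \<Rightarrow> nat \<Rightarrow> nat \<Rightarrow> (nat set \<Rightarrow> 'k::field) \<Rightarrow> nat set \<Rightarrow> 'k" where
  "cone E V v k f \<rho> =
     (if \<rho> \<in> simplices E V (Suc k) \<and> v \<in> \<rho> then insert_sign (\<rho> - {v}) v * f (\<rho> - {v}) else 0)"

lemma cone_in_chains: "cone E V v k f \<in> chains E V (Suc k)"
  by (simp add: chains_def cone_def)

lemma cone_zero [simp]: "cone E V v k (0 :: nat set \<Rightarrow> 'k::field) = 0"
  by (simp add: fun_eq_iff cone_def)

lemma in_star_mono: "in_star E V v \<sigma>' \<Longrightarrow> \<sigma> \<subseteq> \<sigma>' \<Longrightarrow> in_star E V v \<sigma>"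
  unfolding in_star_def by blast

lemma in_star_if_adjacent:
  assumes "\<sigma> \<in> simplices E V k" "v \<in> V" "\<And>a b. E a b \<Longrightarrow> E b a"
    and "\<And>a. a \<in> \<sigma> \<Longrightarrow> a \<noteq> v \<Longrightarrow> E v a"
  shows "in_star E V v \<sigma>"
  using assms by (auto simp: in_star_def simplices_def)

lemma insert_in_simplices_if_in_star:
  assumes "finite V" "in_star E V v \<sigma>" "\<sigma> \<in> simplices E V k" "v \<notin> \<sigma>"
  shows "insert v \<sigma> \<in> simplices E V (Suc k)"
  using assms finite_subset[of \<sigma> V] by (auto simp: simplices_def in_star_def)

lemma cone_apply_insert:
  fixes f :: "nat set \<Rightarrow> 'k::field"
  assumes V: "finite V" and f: "f \<in> chains E V k"
    and star: "\<And>\<sigma>. f \<sigma> \<noteq> 0 \<Longrightarrow> in_star E V v \<sigma>" and "v \<notin> \<sigma>"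
  shows "cone E V v k f (insert v \<sigma>) = insert_sign \<sigma> v * f \<sigma>"
proof (cases "f \<sigma> = 0")
  case False
  then have "insert v \<sigma> \<in> simplices E V (Suc k)"
    using assms by (intro insert_in_simplices_if_in_star) (auto simp: chains_def)
  with \<open>v \<notin> \<sigma>\<close> show ?thesis
    by (simp add: cone_def)
next
  case True
  have "\<sigma> \<in> simplices E V k" if "insert v \<sigma> \<in> simplices E V (Suc k)"
  proof -
    from that have "finite (insert v \<sigma>)"
      by (intro card_ge_0_finite) (simp add: simplices_def)
    with that \<open>v \<notin> \<sigma>\<close> have "finite \<sigma>"
      by simp
    with that \<open>v \<notin> \<sigma>\<close> show ?thesis
      by (auto simp: simplices_def)
  qed
  with True f \<open>v \<notin> \<sigma>\<close> show ?thesis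
    by (auto simp: cone_def chains_def)
qed

lemma cone_homotopy_notin:
  fixes f :: "nat set \<Rightarrow> 'k::field"
  assumes V: "finite V" and f: "f \<in> chains E V (Suc j)"
    and star: "\<And>\<sigma>. f \<sigma> \<noteq> 0 \<Longrightarrow> in_star E V v \<sigma>"
    and \<tau>: "\<tau> \<in> simplices E V (Suc j)" "v \<notin> \<tau>"
  shows "bdry E V (Suc j) (cone E V v (Suc j) f) \<tau> = f \<tau>"
proof -
  have "\<tau> \<subseteq> V" "card \<tau> = Suc (Suc j)"
    using \<tau> by (auto simp: simplices_def)
  then have "bdry E V (Suc j) (cone E V v (Suc j) f) \<tau>
      = (\<Sum>w\<in>V - \<tau>. insert_sign \<tau> w * cone E V v (Suc j) f (insert w \<tau>))"
    by (intro bdry_eq_sum_insert V cone_in_chains)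
  also have "\<dots> = (if v \<in> V - \<tau> then insert_sign \<tau> v * cone E V v (Suc j) f (insert v \<tau>) else 0)"
    using V \<tau> by (intro sum_eq_single) (auto simp: cone_def)
  also have "\<dots> = f \<tau>"
    using star[of \<tau>] \<tau> by (auto simp: cone_apply_insert[OF V f star] mult.assoc[symmetric] in_star_def)
  finally show ?thesis .
qed

lemma cone_homotopy_in:
  fixes f :: "nat set \<Rightarrow> 'k::field"
  assumes V: "finite V" and f: "f \<in> chains E V (Suc j)"
    and star: "\<And>\<sigma>. f \<sigma> \<noteq> 0 \<Longrightarrow> in_star E V v \<sigma>"
    and \<tau>: "\<tau> \<in> simplices E V (Suc j)" "v \<in> \<tau>"
  shows "bdry E V (Suc j) (cone E V v (Suc j) f) \<tau> + cone E V v j (bdry E V j f) \<tau> = f \<tau>"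
proof -
  define \<sigma> where "\<sigma> = \<tau> - {v}"
  have \<tau>V: "\<tau> \<subseteq> V" "card \<tau> = Suc (Suc j)" "finite \<tau>"
    using \<tau> V finite_subset by (auto simp: simplices_def)
  have \<sigma>: "\<tau> = insert v \<sigma>" "v \<notin> \<sigma>" "finite \<sigma>" "\<sigma> \<subseteq> V" "card \<sigma> = Suc j"
    using \<tau> \<tau>V by (auto simp: \<sigma>_def)
  define A where "A w = insert_sign \<sigma> v * (insert_sign \<sigma> w * f (insert w \<sigma>))" for w
  have "bdry E V j f \<sigma> = (\<Sum>w\<in>V - \<sigma>. insert_sign \<sigma> w * f (insert w \<sigma>))"
    by (rule bdry_eq_sum_insert[OF V \<sigma>(4,5) f])
  also have "V - \<sigma> = insert v (V - \<tau>)"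
    using \<tau>V \<tau> by (auto simp: \<sigma>_def)
  finally have "bdry E V j f \<sigma> = insert_sign \<sigma> v * f \<tau> + (\<Sum>w\<in>V - \<tau>. insert_sign \<sigma> w * f (insert w \<sigma>))"
    using V \<tau>(2) by (simp add: \<sigma>(1)[symmetric])
  then have "cone E V v j (bdry E V j f) \<tau> = f \<tau> + sum A (V - \<tau>)"
    using \<tau> by (simp add: cone_def \<sigma>_def[symmetric] A_def algebra_simps sum_distrib_left)
  moreover have "insert_sign \<tau> w * cone E V v (Suc j) f (insert w \<tau>) = - A w" if "w \<in> V - \<tau>" for w
  proof -
    have w: "w \<notin> \<sigma>" "w \<noteq> v"
      using that \<sigma> by auto
    have "cone E V v (Suc j) f (insert w \<tau>) = insert_sign (insert w \<sigma>) v * f (insert w \<sigma>)"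
      using w \<sigma> by (simp add: insert_commute cone_apply_insert[OF V f star])
    moreover have "insert_sign \<tau> w * insert_sign (insert w \<sigma>) v = - (insert_sign \<sigma> v * insert_sign \<sigma> w :: 'k)"
      using w \<sigma> by (simp add: insert_sign_insert)
    ultimately show ?thesis
      by (simp add: A_def flip: mult.assoc)
  qed
  then have "bdry E V (Suc j) (cone E V v (Suc j) f) \<tau> = - sum A (V - \<tau>)"
    by (simp add: bdry_eq_sum_insert[OF V \<tau>V(1,2) cone_in_chains] sum_negf)
  ultimately show ?thesis
    by simp
qed

lemma cone_homotopy:
  fixes f :: "nat set \<Rightarrow> 'k::field"
  assumes V: "finite V" and f: "f \<in> chains E V (Suc j)"
    and star: "\<And>\<sigma>. f \<sigma> \<noteq> 0 \<Longrightarrow> in_star E V v \<sigma>"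
  shows "bdry E V (Suc j) (cone E V v (Suc j) f) + cone E V v j (bdry E V j f) = f"
proof
  fix \<tau>
  show "(bdry E V (Suc j) (cone E V v (Suc j) f) + cone E V v j (bdry E V j f)) \<tau> = f \<tau>"
  proof (cases "\<tau> \<in> simplices E V (Suc j)")
    case True
    then show ?thesis
      using cone_homotopy_notin[OF V f star True] cone_homotopy_in[OF V f star True]
      by (cases "v \<in> \<tau>") (auto simp: cone_def)
  next
    case False
    with f show ?thesis
      by (simp add: bdry_def cone_def chains_def)
  qed
qed

lemma bdry_in_star:
  fixes f :: "nat set \<Rightarrow> 'k::field"
  assumes V: "finite V" and f: "f \<in> chains E V (Suc k)"
    and star: "\<And>\<sigma>. f \<sigma> \<noteq> 0 \<Longrightarrow> in_star E V v \<sigma>" and nz: "bdry E V k f \<tau> \<noteq> 0"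
  shows "in_star E V v \<tau>"
proof -
  obtain w where "f (insert w \<tau>) \<noteq> 0"
    using bdry_nonzero_imp_coface[OF V f nz] by blast
  then show ?thesis
    using star in_star_mono by blast
qed

lemma cycle_in_star_eq_bdry_cone:
  fixes z :: "nat set \<Rightarrow> 'k::field"
  assumes "finite V" "z \<in> chains E V (Suc j)" "bdry E V j z = 0"
    and "\<And>\<sigma>. z \<sigma> \<noteq> 0 \<Longrightarrow> in_star E V v \<sigma>"
  shows "z = bdry E V (Suc j) (cone E V v (Suc j) z)"
  using cone_homotopy[OF assms(1,2,4)] assms(3) by simp

text \<open>Write \<open>z = zp + zq\<close> with \<open>zp\<close> in the star of \<open>p\<close> and \<open>zq\<close> in the star of \<open>q\<close>. Coning \<open>zq\<close> from \<open>q\<close>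
  replaces \<open>z\<close> by the homologous cycle \<open>zp + cone q (\<partial>zq)\<close>; since \<open>\<partial>zq = -\<partial>zp\<close> lies in both stars
  and \<open>p\<close>, \<open>q\<close> are adjacent, this cycle lies in the star of \<open>p\<close> and bounds its cone from \<open>p\<close>.\<close>

lemma cycles_subset_boundaries_if_two_stars:
  assumes V: "finite V" and pq: "E p q" "E q p"
    and cover: "\<And>\<sigma>. \<sigma> \<in> simplices E V (Suc (Suc j)) \<Longrightarrow> in_star E V p \<sigma> \<or> in_star E V q \<sigma>"
  shows "(cycles E V (Suc (Suc j)) :: (nat set \<Rightarrow> 'k::field) set) \<subseteq> boundaries E V (Suc (Suc j))"
proof
  fix z :: "nat set \<Rightarrow> 'k" assume "z \<in> cycles E V (Suc (Suc j))"
  then have z: "z \<in> chains E V (Suc (Suc j))" "bdry E V (Suc j) z = 0"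
    by (simp_all add: mem_cycles_Suc)
  define zp where "zp = (\<lambda>\<sigma>. if in_star E V p \<sigma> then z \<sigma> else 0)"
  define zq where "zq = (\<lambda>\<sigma>. if in_star E V p \<sigma> then 0 else z \<sigma>)"
  have zpq: "zp \<in> chains E V (Suc (Suc j))" "zq \<in> chains E V (Suc (Suc j))" "z = zp + zq"
    using z by (auto simp: zp_def zq_def chains_def fun_eq_iff)
  have star_p: "in_star E V p \<sigma>" if "zp \<sigma> \<noteq> 0" for \<sigma>
    using that by (auto simp: zp_def split: if_splits)
  have star_q: "in_star E V q \<sigma>" if "zq \<sigma> \<noteq> 0" for \<sigma>
    using that z cover by (auto simp: zq_def chains_def split: if_splits)
  define g where "g = bdry E V (Suc j) zq"
  have "g = - bdry E V (Suc j) zp"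
    using z zpq by (simp add: g_def bdry_add eq_neg_iff_add_eq_0 add.commute)
  then have g_star: "in_star E V p \<tau> \<and> in_star E V q \<tau>" if "g \<tau> \<noteq> 0" for \<tau>
    using that bdry_in_star[OF V zpq(1) star_p, of \<tau>] bdry_in_star[OF V zpq(2) star_q, of \<tau>]
    by (simp add: g_def)
  define z' where "z' = zp + cone E V q (Suc j) g"
  have z_eq: "z = z' + bdry E V (Suc (Suc j)) (cone E V q (Suc (Suc j)) zq)"
    using zpq cone_homotopy[OF V zpq(2) star_q] by (simp add: z'_def g_def algebra_simps)
  have "bdry E V (Suc j) (bdry E V (Suc (Suc j)) (cone E V q (Suc (Suc j)) zq)) = 0"
    by (rule bdry_bdry[OF V cone_in_chains])
  with z(2) have "bdry E V (Suc j) z' = 0"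
    by (simp add: z_eq bdry_add)
  moreover have "in_star E V p \<sigma>" if "z' \<sigma> \<noteq> 0" for \<sigma>
  proof (cases "in_star E V p \<sigma>")
    case False
    with that have "q \<in> \<sigma>" "g (\<sigma> - {q}) \<noteq> 0"
      by (auto simp: z'_def zp_def cone_def split: if_splits)
    with g_star[of "\<sigma> - {q}"] pq have "in_star E V p (insert q (\<sigma> - {q}))"
      unfolding in_star_def by blast
    with \<open>q \<in> \<sigma>\<close> show ?thesis
      by (simp add: insert_absorb)
  qed
  moreover have "z' \<in> chains E V (Suc (Suc j))"
    by (simp add: z'_def chains_add zpq cone_in_chains)
  ultimately have "z' = bdry E V (Suc (Suc j)) (cone E V p (Suc (Suc j)) z')"
    by (intro cycle_in_star_eq_bdry_cone V)
  then have "z = bdry E V (Suc (Suc j)) (cone E V p (Suc (Suc j)) z' + cone E V q (Suc (Suc j)) zq)"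
    by (simp add: z_eq bdry_add)
  then show "z \<in> boundaries E V (Suc (Suc j))"
    unfolding boundaries_def by (blast intro: chains_add cone_in_chains)
qed

definition chain_on :: "nat set \<Rightarrow> (nat set \<Rightarrow> 'k::field) \<Rightarrow> nat set \<Rightarrow> 'k" where
  "chain_on A f \<sigma> = (if \<sigma> \<subseteq> A then f \<sigma> else 0)"

lemma chain_on_in_chains: "f \<in> chains E V k \<Longrightarrow> chain_on A f \<in> chains E V k"
  by (simp add: chains_def chain_on_def)

lemma cone_bdry_chain_on_eq_0:
  fixes f :: "nat set \<Rightarrow> 'k::field"
  assumes V: "finite V" and f: "f \<in> chains E V (Suc k)" and \<rho>: "\<not> (v \<in> \<rho> \<and> \<rho> - {v} \<subseteq> A)"
  shows "cone E V v k (bdry E V k (chain_on A f)) \<rho> = 0"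
proof (cases "v \<in> \<rho>")
  case True
  with \<rho> have "\<not> insert w (\<rho> - {v}) \<subseteq> A" for w
    by blast
  then have "bdry E V k (chain_on A f) (\<rho> - {v}) = 0"
    using bdry_nonzero_imp_coface[OF V chain_on_in_chains[OF f]] by (metis chain_on_def)
  then show ?thesis
    by (simp add: cone_def)
qed (simp add: cone_def)

section \<open>One-cycles on the vertex set \<open>{1..n}\<close>\<close>

lemma edge_simplexE:
  assumes "\<rho> \<in> simplices E V 1"
  obtains a b where "\<rho> = {a, b}" "a < b" "a \<in> V" "b \<in> V" "E a b" "E b a"
proof -
  from assms have "card \<rho> = 2"
    by (simp add: simplices_def)
  then obtain a b where ab: "\<rho> = {a, b}" "a < b"
    by (auto simp: card_2_iff neq_iff insert_commute)
  with assms that show ?thesis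
    by (simp add: simplices_def)
qed

lemma bdry_unit_chain_edge:
  assumes V: "finite V" and ab: "a < b" "{a, b} \<in> simplices E V 1"
  shows "bdry E V 0 (unit_chain {a, b} :: nat set \<Rightarrow> 'k::field) = unit_chain {b} - unit_chain {a}"
proof
  fix \<tau>
  have "a \<in> V" "b \<in> V"
    using ab by (auto simp: simplices_def)
  show "bdry E V 0 (unit_chain {a, b}) \<tau> = (unit_chain {b} - unit_chain {a} :: nat set \<Rightarrow> 'k) \<tau>"
  proof (cases "\<tau> \<in> simplices E V 0")
    case False
    with \<open>a \<in> V\<close> \<open>b \<in> V\<close> have "\<tau> \<noteq> {a}" "\<tau> \<noteq> {b}"
      by (auto simp: simplices_def)
    with False show ?thesis
      by (simp add: bdry_def unit_chain_def)
  next
    case True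
    then obtain v where v: "\<tau> = {v}" "v \<in> V"
      by (auto simp: simplices_def card_1_singleton_iff)
    have "bdry E V 0 (unit_chain {a, b}) {v}
        = (\<Sum>w\<in>V - {v}. insert_sign {v} w * (unit_chain {a, b} {w, v} :: 'k))"
      by (rule bdry_eq_sum_insert[OF V]) (use v ab unit_chain_in_chains in auto)
    also have "\<dots> = (unit_chain {b} - unit_chain {a} :: nat set \<Rightarrow> 'k) {v}"
    proof -
      consider "v = a" | "v = b" | "v \<noteq> a" "v \<noteq> b"
        by blast
      then show ?thesis
      proof cases
        case 1
        then show ?thesis
          using ab \<open>b \<in> V\<close> V
          by (subst sum_eq_single[where v = b]) (auto simp: unit_chain_def doubleton_eq_iff insert_sign_singleton)
      next
        case 2
        then show ?thesis
          using ab \<open>a \<in> V\<close> V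
          by (subst sum_eq_single[where v = a]) (auto simp: unit_chain_def doubleton_eq_iff insert_sign_singleton)
      qed (auto simp: unit_chain_def doubleton_eq_iff intro!: sum.neutral)
    qed
    finally show ?thesis
      using v by simp
  qed
qed

lemma cycle_edge_eq_0_if_other_edges_at_vertex:
  fixes r :: "nat set \<Rightarrow> 'k::field"
  assumes V: "finite V" and r: "r \<in> chains E V 1" "bdry E V 0 r = 0"
    and uv: "v \<in> V" "u \<in> V" "u \<noteq> v"
    and others: "\<And>w. w \<in> V \<Longrightarrow> w \<noteq> v \<Longrightarrow> w \<noteq> u \<Longrightarrow> r {w, v} = 0"
  shows "r {u, v} = 0"
proof -
  have "0 = bdry E V 0 r {v}"
    using r by simp
  also have "\<dots> = (\<Sum>w\<in>V - {v}. insert_sign {v} w * r (insert w {v}))"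
    using uv r by (intro bdry_eq_sum_insert V) auto
  also have "\<dots> = insert_sign {v} u * r {u, v}"
    using V uv others by (subst sum_eq_single[where v = u]) auto
  finally show ?thesis
    by simp
qed

lemma chain_eq_0_if_edges_eq_0:
  fixes r :: "nat set \<Rightarrow> 'k::field"
  assumes "r \<in> chains E V 1" "\<And>a b. a \<in> V \<Longrightarrow> b \<in> V \<Longrightarrow> a < b \<Longrightarrow> r {a, b} = 0"
  shows "r = 0"
proof
  fix \<rho>
  show "r \<rho> = 0 \<rho>"
  proof (cases "\<rho> \<in> simplices E V 1")
    case True
    then obtain a b where "\<rho> = {a, b}" "a < b" "a \<in> V" "b \<in> V"
      by (elim edge_simplexE)
    with assms(2) show ?thesis
      by simp
  qed (use assms(1) in \<open>simp add: chains_def\<close>)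
qed

text \<open>The edges \<open>{1,b}\<close> (\<open>l < b < n\<close>), \<open>{a,n}\<close> (\<open>2 \<le> a \<le> l\<close>) and \<open>{1,n}\<close> form a tree, which supports
  no nonzero cycle: peel off its leaves.\<close>

lemma cycle_eq_0_if_vanishes_off_tree:
  fixes r :: "nat set \<Rightarrow> 'k::field"
  assumes l: "1 \<le> l" "l < n" and r: "r \<in> chains E {1..n} 1" "bdry E {1..n} 0 r = 0"
    and same_side: "\<And>a b. a \<in> {1..n} \<Longrightarrow> b \<in> {1..n} \<Longrightarrow> a \<noteq> b \<Longrightarrow> (a \<le> l \<longleftrightarrow> b \<le> l) \<Longrightarrow> r {a, b} = 0"
    and core: "\<And>a b. 2 \<le> a \<Longrightarrow> a \<le> l \<Longrightarrow> l < b \<Longrightarrow> b < n \<Longrightarrow> r {a, b} = 0"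
  shows "r = 0"
proof -
  note leaf = cycle_edge_eq_0_if_other_edges_at_vertex[OF finite_atLeastAtMost r]
  have at_pos: "r {1, b} = 0" if b: "l < b" "b < n" for b
  proof (rule leaf)
    fix w assume w: "w \<in> {1..n}" "w \<noteq> b" "w \<noteq> 1"
    show "r {w, b} = 0"
    proof (cases "w \<le> l")
      case True
      with w b show ?thesis
        by (intro core) auto
    qed (use w b in \<open>auto intro: same_side\<close>)
  qed (use b l in auto)
  have at_neg: "r {a, n} = 0" if a: "2 \<le> a" "a \<le> l" for a
  proof -
    have "r {n, a} = 0"
    proof (rule leaf)
      fix w assume w: "w \<in> {1..n}" "w \<noteq> a" "w \<noteq> n"
      show "r {w, a} = 0"
      proof (cases "w \<le> l")
        case False
        with w a have "r {a, w} = 0"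
          by (intro core) auto
        then show ?thesis
          by (simp add: insert_commute)
      qed (use w a l in \<open>auto intro: same_side\<close>)
    qed (use a l in auto)
    then show ?thesis
      by (simp add: insert_commute)
  qed
  have "r {1, n} = 0"
  proof (rule leaf)
    fix w assume w: "w \<in> {1..n}" "w \<noteq> n" "w \<noteq> 1"
    show "r {w, n} = 0"
    proof (cases "w \<le> l")
      case True
      with w show ?thesis
        by (intro at_neg) auto
    qed (use w l in \<open>auto intro: same_side\<close>)
  qed (use l in auto)
  show ?thesis
  proof (rule chain_eq_0_if_edges_eq_0[OF r(1)])
    fix a b assume ab: "a \<in> {1..n}" "b \<in> {1..n}" "a < b"
    show "r {a, b} = 0"
    proof (cases "a \<le> l \<longleftrightarrow> b \<le> l")
      case False
      then have "a \<le> l" "l < b"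
        using ab(3) by auto
      then consider "a = 1" "b = n" | "a = 1" "b < n" | "2 \<le> a" "b = n" | "2 \<le> a" "b < n"
        using ab by fastforce
      then show ?thesis
        by cases (use \<open>r {1, n} = 0\<close> at_pos at_neg core \<open>a \<le> l\<close> \<open>l < b\<close> in auto)
    qed (use ab same_side in auto)
  qed
qed

definition square_chain :: "nat \<Rightarrow> nat \<Rightarrow> nat \<Rightarrow> nat set \<Rightarrow> 'k::field" where
  "square_chain n i j = unit_chain {1, j} - unit_chain {i, j} + unit_chain {i, n} - unit_chain {1, n}"

section \<open>The graphs \<open>G\<^sub>t(x\<^sup>Tx)\<close>\<close>

text \<open>Vertices \<open>1..l\<close> carry the negative coordinates, \<open>l+1..n\<close> the nonnegative
  ones, and the assumptions record the comparisons between entries of \<open>x\<^sup>Tx\<close> that decide which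
  edges are added first.\<close>

locale outer_product_graph =
  fixes E :: "nat \<Rightarrow> nat \<Rightarrow> bool" and n l :: nat
  assumes l_pos: "1 \<le> l" and l_less: "l < n"
    and edge_vertices: "E i j \<Longrightarrow> i \<in> {1..n} \<and> j \<in> {1..n} \<and> i \<noteq> j"
    and edge_sym: "E i j \<Longrightarrow> E j i"
    and cross_edge_to_extremes: "E i j \<Longrightarrow> i \<le> l \<Longrightarrow> l < j \<Longrightarrow> E 1 j \<and> E i n"
    and same_side_edge_forces_cross:
      "E a b \<Longrightarrow> (a \<le> l \<longleftrightarrow> b \<le> l) \<Longrightarrow> 1 \<le> i \<Longrightarrow> i \<le> l \<Longrightarrow> l < j \<Longrightarrow> j \<le> n \<Longrightarrow> E i j"
    and neg_edge_to_l: "E a b \<Longrightarrow> a \<le> l \<Longrightarrow> b \<le> l \<Longrightarrow> b \<noteq> l \<Longrightarrow> E l b"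
    and pos_edge_to_Suc_l: "E a b \<Longrightarrow> l < a \<Longrightarrow> l < b \<Longrightarrow> b \<noteq> l + 1 \<Longrightarrow> E (l + 1) b"
begin

lemma big_simplex_two_on_one_side:
  assumes "\<sigma> \<in> simplices E {1..n} (Suc (Suc j))"
  shows "2 \<le> card {x\<in>\<sigma>. x \<le> l} \<or> 2 \<le> card {x\<in>\<sigma>. \<not> x \<le> l}"
  using assms finite_subset[of \<sigma> "{1..n}"]
  by (intro two_le_card_filter_or_filter_not) (auto simp: simplices_def)

lemma big_simplex_same_side_edge:
  assumes "\<sigma> \<in> simplices E {1..n} (Suc (Suc j))"
  obtains a b where "a \<in> \<sigma>" "b \<in> \<sigma>" "E a b" "a \<le> l \<longleftrightarrow> b \<le> l"
proof -
  obtain a b where "a \<in> \<sigma>" "b \<in> \<sigma>" "a \<noteq> b" "a \<le> l \<longleftrightarrow> b \<le> l"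
    using big_simplex_two_on_one_side[OF assms]
    by (elim disjE exists_two_if_two_le_card) auto
  moreover from calculation have "E a b"
    using assms by (auto simp: simplices_def)
  ultimately show ?thesis
    using that by blast
qed

lemma cross_edge_if_big_simplex:
  assumes "\<sigma> \<in> simplices E {1..n} (Suc (Suc j))" "1 \<le> i" "i \<le> l" "l < j'" "j' \<le> n"
  shows "E i j'"
proof -
  obtain a b where "E a b" "a \<le> l \<longleftrightarrow> b \<le> l"
    using assms(1) by (rule big_simplex_same_side_edge)
  then show ?thesis
    using same_side_edge_forces_cross assms(2-5) by blast
qed

lemma big_simplex_in_star_Suc_l:
  assumes \<sigma>: "\<sigma> \<in> simplices E {1..n} (Suc (Suc j))" and pos: "2 \<le> card {x\<in>\<sigma>. \<not> x \<le> l}"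
  shows "in_star E {1..n} (l + 1) \<sigma>"
proof (rule in_star_if_adjacent[OF \<sigma>])
  fix a assume a: "a \<in> \<sigma>" "a \<noteq> l + 1"
  then have "a \<in> {1..n}" "\<And>b. b \<in> \<sigma> \<Longrightarrow> b \<noteq> a \<Longrightarrow> E b a"
    using \<sigma> by (auto simp: simplices_def)
  show "E (l + 1) a"
  proof (cases "a \<le> l")
    case True
    with \<open>a \<in> {1..n}\<close> have "E a (l + 1)"
      using l_less by (intro cross_edge_if_big_simplex[OF \<sigma>]) auto
    then show ?thesis
      by (rule edge_sym)
  next
    case False
    obtain b where "b \<in> {x\<in>\<sigma>. \<not> x \<le> l}" "b \<noteq> a"
      by (rule exists_other_if_two_le_card[OF pos]) (use a False in auto)
    with \<open>\<And>b. b \<in> \<sigma> \<Longrightarrow> b \<noteq> a \<Longrightarrow> E b a\<close> have "E b a" "l < b"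
      by auto
    with False a show ?thesis
      by (intro pos_edge_to_Suc_l[of b a]) auto
  qed
qed (use l_less edge_sym in auto)

lemma big_simplex_in_star_l:
  assumes \<sigma>: "\<sigma> \<in> simplices E {1..n} (Suc (Suc j))" and neg: "2 \<le> card {x\<in>\<sigma>. x \<le> l}"
  shows "in_star E {1..n} l \<sigma>"
proof (rule in_star_if_adjacent[OF \<sigma>])
  fix a assume a: "a \<in> \<sigma>" "a \<noteq> l"
  then have "a \<in> {1..n}" "\<And>b. b \<in> \<sigma> \<Longrightarrow> b \<noteq> a \<Longrightarrow> E b a"
    using \<sigma> by (auto simp: simplices_def)
  show "E l a"
  proof (cases "a \<le> l")
    case False
    with \<open>a \<in> {1..n}\<close> show ?thesis
      using l_pos by (intro cross_edge_if_big_simplex[OF \<sigma>]) auto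
  next
    case True
    obtain b where "b \<in> {x\<in>\<sigma>. x \<le> l}" "b \<noteq> a"
      by (rule exists_other_if_two_le_card[OF neg]) (use a True in auto)
    with True a \<open>\<And>b. b \<in> \<sigma> \<Longrightarrow> b \<noteq> a \<Longrightarrow> E b a\<close> show ?thesis
      using neg_edge_to_l by auto
  qed
qed (use l_pos l_less edge_sym in auto)

lemma big_simplex_in_star:
  assumes "\<sigma> \<in> simplices E {1..n} (Suc (Suc j))"
  shows "in_star E {1..n} (l + 1) \<sigma> \<or> in_star E {1..n} l \<sigma>"
  using big_simplex_two_on_one_side[OF assms] big_simplex_in_star_Suc_l[OF assms] big_simplex_in_star_l[OF assms]
  by blast

lemma betti_eq_0_if_gt_1:
  assumes "1 < k"
  shows "betti (K :: 'k::field itself) E {1..n} k = 0"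
proof -
  obtain j where k: "k = Suc (Suc j)"
    using less_imp_Suc_add[OF assms] by auto
  have "(cycles E {1..n} k :: (nat set \<Rightarrow> 'k) set) \<subseteq> boundaries E {1..n} k"
  proof (cases "simplices E {1..n} k = {}")
    case True
    then have "cycles E {1..n} k \<subseteq> {0 :: nat set \<Rightarrow> 'k}"
      using cycles_subset_chains by (fastforce simp: chains_def)
    moreover have "(0 :: nat set \<Rightarrow> 'k) \<in> boundaries E {1..n} k"
      unfolding boundaries_def by (rule image_eqI[where x = 0]) (simp_all add: chains_def)
    ultimately show ?thesis
      by blast
  next
    case False
    then obtain \<sigma> where "\<sigma> \<in> simplices E {1..n} (Suc (Suc j))"
      using k by blast
    then have "E l (l + 1)"
      using cross_edge_if_big_simplex l_pos l_less by simp
    then have "E (l + 1) l" "E l (l + 1)"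
      using edge_sym by auto
    then show ?thesis
      unfolding k using big_simplex_in_star
      by (intro cycles_subset_boundaries_if_two_stars) auto
  qed
  then have "betti K E {1..n} k \<le> card ({} :: (nat set \<Rightarrow> 'k) set)"
    by (intro betti_le_card) (auto intro: chain_space.span_superset[THEN subsetD])
  then show ?thesis
    by simp
qed

definition core_edges :: "(nat \<times> nat) set" where
  "core_edges = {(i, j). 2 \<le> i \<and> i \<le> l \<and> l < j \<and> j < n \<and> E i j}"

lemma core_edges_subset: "core_edges \<subseteq> {2..l} \<times> {l + 1..n - 1}"
  by (auto simp: core_edges_def)

lemma finite_core_edges: "finite core_edges"
  using core_edges_subset finite_subset by blast

lemma card_core_edges_le: "card core_edges \<le> (l - 1) * (n - l - 1)"
  using card_mono[OF _ core_edges_subset] by (simp add: card_cartesian_product)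

lemma edge_in_simplices: "E a b \<Longrightarrow> {a, b} \<in> simplices E {1..n} 1"
  using edge_vertices[of a b] edge_sym[of a b] by (auto simp: simplices_def)

lemma square_chain_in_cycles:
  assumes "(i, j) \<in> core_edges"
  shows "(square_chain n i j :: nat set \<Rightarrow> 'k::field) \<in> cycles E {1..n} 1"
proof -
  have ij: "2 \<le> i" "i \<le> l" "l < j" "j < n" "E i j"
    using assms by (auto simp: core_edges_def)
  then have "E 1 j" "E i n"
    using cross_edge_to_extremes by auto
  then have "E 1 n"
    using cross_edge_to_extremes[OF \<open>E 1 j\<close>] l_pos ij by auto
  note edges = edge_in_simplices[OF \<open>E 1 j\<close>] edge_in_simplices[OF \<open>E i j\<close>]
    edge_in_simplices[OF \<open>E i n\<close>] edge_in_simplices[OF \<open>E 1 n\<close>]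
  have chain: "(square_chain n i j :: nat set \<Rightarrow> 'k) \<in> chains E {1..n} 1"
    unfolding square_chain_def by (intro chains_add chains_diff unit_chain_in_chains edges)
  have "bdry E {1..n} 0 (square_chain n i j :: nat set \<Rightarrow> 'k)
      = (unit_chain {j} - unit_chain {1}) - (unit_chain {j} - unit_chain {i})
        + (unit_chain {n} - unit_chain {i}) - (unit_chain {n} - unit_chain {1})"
    using ij l_pos l_less by (simp only: square_chain_def bdry_add bdry_diff bdry_unit_chain_edge[OF _ _ edges(1)]
        bdry_unit_chain_edge[OF _ _ edges(2)] bdry_unit_chain_edge[OF _ _ edges(3)]
        bdry_unit_chain_edge[OF _ _ edges(4)] finite_atLeastAtMost)
  also have "\<dots> = 0"
    by (simp add: algebra_simps)
  finally show ?thesis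
    using chain by (simp add: mem_cycles_Suc)
qed

lemma square_chain_same_side:
  assumes "(i, j) \<in> core_edges" "a \<le> l \<longleftrightarrow> b \<le> l"
  shows "(square_chain n i j :: nat set \<Rightarrow> 'k::field) {a, b} = 0"
proof -
  have "unit_chain {x, y} {a, b} = (0 :: 'k)" if "x \<le> l" "l < y" for x y
    using that assms(2) by (auto simp: unit_chain_def doubleton_eq_iff)
  then show ?thesis
    using assms(1) l_pos l_less by (simp add: square_chain_def core_edges_def)
qed

lemma square_chain_core:
  assumes "(i, j) \<in> core_edges" "2 \<le> a" "a \<le> l" "l < b" "b < n"
  shows "(square_chain n i j :: nat set \<Rightarrow> 'k::field) {a, b} = (if (a, b) = (i, j) then -1 else 0)"
proof -
  have "i \<le> l" "l < j"
    using assms(1) by (auto simp: core_edges_def)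
  then have "{a, b} = {i, j} \<longleftrightarrow> (a, b) = (i, j)"
    using assms by (auto simp: doubleton_eq_iff)
  moreover have "{a, b} \<noteq> {1, j}" "{a, b} \<noteq> {i, n}" "{a, b} \<noteq> {1, n}"
    using assms by (auto simp: doubleton_eq_iff)
  ultimately show ?thesis
    by (simp add: square_chain_def unit_chain_def)
qed

lemma square_chain_at_core_edge:
  assumes "(i, j) \<in> core_edges" "(a, b) \<in> core_edges"
  shows "(square_chain n i j :: nat set \<Rightarrow> 'k::field) {a, b} = (if (a, b) = (i, j) then -1 else 0)"
  using assms(2) by (intro square_chain_core[OF assms(1)]) (auto simp: core_edges_def)

lemma cross_edge_if_same_side_edge:
  assumes "\<rho> \<in> simplices E {1..n} 1" "\<rho> \<subseteq> {..l} \<or> \<rho> \<subseteq> {l<..}" "1 \<le> i" "i \<le> l" "l < j" "j \<le> n"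
  shows "E i j"
proof -
  obtain a b where ab: "\<rho> = {a, b}" "E a b"
    using assms(1) by (elim edge_simplexE)
  with assms(2) have "a \<le> l \<longleftrightarrow> b \<le> l"
    by auto
  then show ?thesis
    using same_side_edge_forces_cross[OF ab(2) _ assms(3-6)] by blast
qed

lemma in_star_n_if_neg_edge:
  assumes "\<sigma> \<in> simplices E {1..n} 1" "\<sigma> \<subseteq> {..l}"
  shows "in_star E {1..n} n \<sigma>"
proof (rule in_star_if_adjacent[OF assms(1)])
  fix a assume "a \<in> \<sigma>" "a \<noteq> n"
  with assms have "E a n"
    using l_less by (intro cross_edge_if_same_side_edge[OF assms(1)]) (auto simp: simplices_def)
  then show "E n a"
    by (rule edge_sym)
qed (use l_less edge_sym in auto)

lemma in_star_1_if_pos_edge: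
  assumes "\<sigma> \<in> simplices E {1..n} 1" "\<sigma> \<subseteq> {l<..}"
  shows "in_star E {1..n} 1 \<sigma>"
proof (rule in_star_if_adjacent[OF assms(1)])
  fix a assume "a \<in> \<sigma>" "a \<noteq> 1"
  with assms show "E 1 a"
    using l_pos by (intro cross_edge_if_same_side_edge[OF assms(1)]) (auto simp: simplices_def)
qed (use l_less edge_sym in auto)

definition fill :: "(nat set \<Rightarrow> 'k::field) \<Rightarrow> nat set \<Rightarrow> 'k" where
  "fill z = cone E {1..n} n 1 (chain_on {..l} z) + cone E {1..n} 1 1 (chain_on {l<..} z)"

lemma fill_in_chains: "fill z \<in> chains E {1..n} 2"
  by (simp add: fill_def numeral_2_eq_2 chains_add cone_in_chains)

lemma bdry_fill:
  fixes z :: "nat set \<Rightarrow> 'k::field"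
  assumes z: "z \<in> chains E {1..n} 1"
  shows "bdry E {1..n} 1 (fill z)
    = chain_on {..l} z - cone E {1..n} n 0 (bdry E {1..n} 0 (chain_on {..l} z))
      + (chain_on {l<..} z - cone E {1..n} 1 0 (bdry E {1..n} 0 (chain_on {l<..} z)))"
proof -
  have z1: "z \<in> chains E {1..n} (Suc 0)"
    using z by simp
  have "in_star E {1..n} n \<sigma>" if "chain_on {..l} z \<sigma> \<noteq> 0" for \<sigma>
    using that z by (intro in_star_n_if_neg_edge) (auto simp: chain_on_def chains_def split: if_splits)
  from cone_homotopy[OF _ chain_on_in_chains[OF z1] this]
  have "bdry E {1..n} 1 (cone E {1..n} n 1 (chain_on {..l} z))
      = chain_on {..l} z - cone E {1..n} n 0 (bdry E {1..n} 0 (chain_on {..l} z))"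
    by (simp add: eq_diff_eq)
  moreover have "in_star E {1..n} 1 \<sigma>" if "chain_on {l<..} z \<sigma> \<noteq> 0" for \<sigma>
    using that z by (intro in_star_1_if_pos_edge) (auto simp: chain_on_def chains_def split: if_splits)
  from cone_homotopy[OF _ chain_on_in_chains[OF z1] this]
  have "bdry E {1..n} 1 (cone E {1..n} 1 1 (chain_on {l<..} z))
      = chain_on {l<..} z - cone E {1..n} 1 0 (bdry E {1..n} 0 (chain_on {l<..} z))"
    by (simp add: eq_diff_eq)
  ultimately show ?thesis
    by (simp add: fill_def bdry_add)
qed

lemma bdry_fill_same_side:
  fixes z :: "nat set \<Rightarrow> 'k::field"
  assumes z: "z \<in> chains E {1..n} 1" and ab: "a \<noteq> b" "a \<le> l \<longleftrightarrow> b \<le> l"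
  shows "bdry E {1..n} 1 (fill z) {a, b} = z {a, b}"
proof -
  have z1: "z \<in> chains E {1..n} (Suc 0)"
    using z by simp
  note vanish = cone_bdry_chain_on_eq_0[OF finite_atLeastAtMost z1]
  have not_subset: "\<not> {a, b} - {v} \<subseteq> A" if "a \<notin> A" "b \<notin> A" for v A
    using that ab(1) by blast
  have "\<not> (n \<in> {a, b} \<and> {a, b} - {n} \<subseteq> {..l})"
    using ab(2) l_less not_subset[of "{..l}"] by (cases "a \<le> l") simp_all
  then have "cone E {1..n} n 0 (bdry E {1..n} 0 (chain_on {..l} z)) {a, b} = 0"
    by (rule vanish)
  moreover have "\<not> (1 \<in> {a, b} \<and> {a, b} - {1} \<subseteq> {l<..})"
    using ab(2) l_pos not_subset[of "{l<..}"] by (cases "a \<le> l") simp_all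
  then have "cone E {1..n} 1 0 (bdry E {1..n} 0 (chain_on {l<..} z)) {a, b} = 0"
    by (rule vanish)
  moreover have "chain_on {..l} z {a, b} + chain_on {l<..} z {a, b} = z {a, b}"
    using ab(2) by (cases "a \<le> l") (simp_all add: chain_on_def)
  ultimately show ?thesis
    unfolding bdry_fill[OF z] by simp
qed

lemma bdry_fill_core:
  fixes z :: "nat set \<Rightarrow> 'k::field"
  assumes z: "z \<in> chains E {1..n} 1" and ab: "2 \<le> a" "a \<le> l" "l < b" "b < n"
  shows "bdry E {1..n} 1 (fill z) {a, b} = 0"
proof -
  have z1: "z \<in> chains E {1..n} (Suc 0)"
    using z by simp
  note vanish = cone_bdry_chain_on_eq_0[OF finite_atLeastAtMost z1]
  have "cone E {1..n} n 0 (bdry E {1..n} 0 (chain_on {..l} z)) {a, b} = 0"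
    by (rule vanish) (use ab in auto)
  moreover have "cone E {1..n} 1 0 (bdry E {1..n} 0 (chain_on {l<..} z)) {a, b} = 0"
    by (rule vanish) (use ab in auto)
  ultimately show ?thesis
    unfolding bdry_fill[OF z] using ab by (simp add: chain_on_def)
qed

definition square_part :: "(nat set \<Rightarrow> 'k::field) \<Rightarrow> nat set \<Rightarrow> 'k" where
  "square_part z = (\<Sum>(i, j)\<in>core_edges. chain_scale (z {i, j}) (square_chain n i j))"

lemma square_part_in_cycles: "(square_part z :: nat set \<Rightarrow> 'k::field) \<in> cycles E {1..n} 1"
  unfolding square_part_def
proof (rule cycles_sum)
  fix p assume p: "p \<in> core_edges"
  obtain i j where ij: "p = (i, j)"
    by fastforce
  with p have "chain_scale (z {i, j}) (square_chain n i j) \<in> cycles E {1..n} 1"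
    by (intro cycles_scale square_chain_in_cycles) simp
  with ij show "(case p of (i, j) \<Rightarrow> chain_scale (z {i, j}) (square_chain n i j)) \<in> cycles E {1..n} 1"
    by simp
qed

lemma square_part_in_span:
  "square_part z \<in> chain_space.span ((\<lambda>(i, j). square_chain n i j) ` core_edges)"
  unfolding square_part_def
  by (intro chain_space.span_sum) (auto intro: chain_space.span_scale chain_space.span_base)

lemma square_part_same_side:
  "a \<le> l \<longleftrightarrow> b \<le> l \<Longrightarrow> square_part z {a, b} = 0"
  by (auto simp: square_part_def sum_fun_apply chain_scale_def square_chain_same_side intro!: sum.neutral)

lemma square_part_core:
  assumes z: "z \<in> chains E {1..n} 1" and ab: "2 \<le> a" "a \<le> l" "l < b" "b < n"
  shows "square_part z {a, b} = - z {a, b}"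
proof -
  have "square_part z {a, b} = (\<Sum>p\<in>core_edges. if p = (a, b) then - z {a, b} else 0)"
    using ab by (auto simp: square_part_def sum_fun_apply chain_scale_def square_chain_core intro!: sum.cong)
  also have "\<dots> = (if (a, b) \<in> core_edges then - z {a, b} else 0)"
    using finite_core_edges by (rule sum.delta)
  also have "\<dots> = - z {a, b}"
  proof (cases "(a, b) \<in> core_edges")
    case False
    with ab have "{a, b} \<notin> simplices E {1..n} 1"
      by (auto simp: simplices_def core_edges_def)
    with False show ?thesis
      using z by (simp add: chains_def)
  qed simp
  finally show ?thesis .
qed

lemma cycles_subset_span_squares:
  "(cycles E {1..n} 1 :: (nat set \<Rightarrow> 'k::field) set)
     \<subseteq> chain_space.span (boundaries E {1..n} 1 \<union> (\<lambda>(i, j). square_chain n i j) ` core_edges)"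
proof
  fix z :: "nat set \<Rightarrow> 'k" assume "z \<in> cycles E {1..n} 1"
  then have z: "z \<in> chains E {1..n} 1" "bdry E {1..n} 0 z = 0"
    by (simp_all add: mem_cycles_Suc)
  define r where "r = z - bdry E {1..n} 1 (fill z) + square_part z"
  have r_chain: "r \<in> chains E {1..n} 1"
    using z square_part_in_cycles[of z]
    by (auto simp: r_def mem_cycles_Suc intro!: chains_add chains_diff bdry_in_chains)
  have r_cycle: "bdry E {1..n} 0 r = 0"
    using z square_part_in_cycles[of z] bdry_bdry[of "{1..n}" "fill z" E 0] fill_in_chains[of z]
    by (simp add: r_def bdry_add bdry_diff mem_cycles_Suc numeral_2_eq_2)
  have "r = 0"
  proof (rule cycle_eq_0_if_vanishes_off_tree[OF l_pos l_less r_chain r_cycle])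
    show "r {a, b} = 0" if "a \<in> {1..n}" "b \<in> {1..n}" "a \<noteq> b" "a \<le> l \<longleftrightarrow> b \<le> l" for a b
      using that bdry_fill_same_side[OF z(1), of a b] square_part_same_side[of a b z]
      by (simp add: r_def)
    show "r {a, b} = 0" if "2 \<le> a" "a \<le> l" "l < b" "b < n" for a b
      using that bdry_fill_core[OF z(1), of a b] square_part_core[OF z(1), of a b]
      by (simp add: r_def)
  qed
  then have "z = bdry E {1..n} 1 (fill z) - square_part z"
    by (simp add: r_def algebra_simps)
  moreover have "bdry E {1..n} 1 (fill z) \<in> boundaries E {1..n} 1"
    using fill_in_chains[of z] by (simp add: boundaries_def numeral_2_eq_2)
  moreover have "square_part z \<in> chain_space.span (boundaries E {1..n} 1 \<union> (\<lambda>(i, j). square_chain n i j) ` core_edges)"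
    using square_part_in_span[of z] chain_space.span_mono[OF Un_upper2] by blast
  ultimately show "z \<in> chain_space.span (boundaries E {1..n} 1 \<union> (\<lambda>(i, j). square_chain n i j) ` core_edges)"
    by (metis chain_space.span_base chain_space.span_diff UnI1)
qed

lemma betti1_le: "betti (K :: 'k::field itself) E {1..n} 1 \<le> (l - 1) * (n - l - 1)"
proof -
  have "betti K E {1..n} 1 \<le> card ((\<lambda>(i, j). square_chain n i j :: nat set \<Rightarrow> 'k) ` core_edges)"
    by (intro betti_le_card cycles_subset_span_squares finite_imageI finite_core_edges) simp
  also have "\<dots> \<le> card core_edges"
    by (rule card_image_le[OF finite_core_edges])
  finally show ?thesis
    using card_core_edges_le by linarith
qed

lemma inj_on_square_chain: "inj_on (\<lambda>(i, j). square_chain n i j :: nat set \<Rightarrow> 'k::field) core_edges"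
proof (rule inj_onI)
  fix p q
  assume "p \<in> core_edges" "q \<in> core_edges"
    and "(\<lambda>(i, j). square_chain n i j :: nat set \<Rightarrow> 'k) p = (\<lambda>(i, j). square_chain n i j) q"
  moreover obtain i j a b where "p = (i, j)" "q = (a, b)"
    by fastforce
  ultimately have ij: "(i, j) \<in> core_edges" and ab: "(a, b) \<in> core_edges"
    and eq: "(square_chain n i j :: nat set \<Rightarrow> 'k) = square_chain n a b"
    by simp_all
  have "(-1 :: 'k) = square_chain n a b {a, b}"
    using square_chain_at_core_edge[OF ab ab, where 'k = 'k] by simp
  also have "\<dots> = square_chain n i j {a, b}"
    by (simp add: eq)
  also have "\<dots> = (if (a, b) = (i, j) then -1 else 0)"
    by (rule square_chain_at_core_edge[OF ij ab])
  finally show "p = q"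
    using \<open>p = (i, j)\<close> \<open>q = (a, b)\<close> by (simp split: if_splits)
qed

lemma independent_square_chains:
  "chain_space.independent ((\<lambda>(i, j). square_chain n i j :: nat set \<Rightarrow> 'k::field) ` core_edges)"
proof (rule chain_space.independent_if_scalars_zero)
  let ?S = "(\<lambda>(i, j). square_chain n i j :: nat set \<Rightarrow> 'k) ` core_edges"
  show "finite ?S"
    by (simp add: finite_core_edges)
  fix c s assume zero: "(\<Sum>x\<in>?S. chain_scale (c x) x) = 0" and "s \<in> ?S"
  then obtain a b where ab: "(a, b) \<in> core_edges" "s = square_chain n a b"
    by auto
  have "x {a, b} = 0" if "x \<in> ?S" "x \<noteq> s" for x
    using that ab square_chain_at_core_edge[OF _ ab(1), where 'k = 'k] by (auto split: if_splits)
  then have "(\<Sum>x\<in>?S. c x * x {a, b}) = c s * s {a, b}"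
    using finite_core_edges ab by (subst sum_eq_single[where v = s]) auto
  moreover have "(\<Sum>x\<in>?S. c x * x {a, b}) = 0"
    using fun_cong[OF zero, of "{a, b}"] by (simp add: sum_fun_apply chain_scale_def)
  ultimately show "c s = 0"
    using ab square_chain_at_core_edge[OF ab(1) ab(1), where 'k = 'k] by simp
qed

lemma betti1_complete_bipartite:
  assumes complete: "\<And>i j. E i j \<longleftrightarrow> i \<in> {1..n} \<and> j \<in> {1..n} \<and> (i \<le> l \<longleftrightarrow> l < j)"
  shows "betti (K :: 'k::field itself) E {1..n} 1 = (l - 1) * (n - l - 1)"
proof -
  let ?S = "(\<lambda>(i, j). square_chain n i j :: nat set \<Rightarrow> 'k) ` core_edges"
  have "simplices E {1..n} (Suc (Suc 0)) = {}"
  proof (rule ccontr)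
    assume "simplices E {1..n} (Suc (Suc 0)) \<noteq> {}"
    then obtain \<sigma> where "\<sigma> \<in> simplices E {1..n} (Suc (Suc 0))"
      by blast
    then obtain a b where "E a b" "a \<le> l \<longleftrightarrow> b \<le> l"
      by (rule big_simplex_same_side_edge)
    then show False
      using complete[of a b] by auto
  qed
  then have "(chains E {1..n} 2 :: (nat set \<Rightarrow> 'k) set) \<subseteq> {0}"
    by (auto simp: chains_def numeral_2_eq_2 fun_eq_iff)
  then have "(boundaries E {1..n} 1 :: (nat set \<Rightarrow> 'k) set) \<subseteq> {0}"
    by (auto simp: boundaries_def numeral_2_eq_2)
  moreover have "?S \<subseteq> cycles E {1..n} 1"
    using square_chain_in_cycles by auto
  ultimately have "card ?S \<le> betti K E {1..n} 1"
    by (intro betti_ge_card independent_square_chains) simp_all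
  moreover have "card ?S = card core_edges"
    by (rule card_image[OF inj_on_square_chain])
  moreover have "core_edges = {2..l} \<times> {l + 1..n - 1}"
    using l_less by (auto simp: core_edges_def complete)
  then have "card core_edges = (l - 1) * (n - l - 1)"
    by (simp add: card_cartesian_product)
  ultimately show ?thesis
    using betti1_le[of K] by linarith
qed

end

lemma ord_mat_mono:
  assumes "M i j \<le> M a b"
  shows "ord_mat M n i j \<le> ord_mat M n a b"
  unfolding ord_mat_def
proof (rule card_mono)
  show "finite {(a', b'). 1 \<le> a' \<and> a' < b' \<and> b' \<le> n \<and> M a' b' \<le> M a b}"
    by (rule finite_subset[of _ "{1..n} \<times> {1..n}"]) auto
qed (use assms in auto)

lemma Gt_edge_if_le:
  assumes "Gt_edge M n t a b" "i \<in> {1..n}" "j \<in> {1..n}" "i \<noteq> j" "M i j \<le> M a b"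
  shows "Gt_edge M n t i j"
  using assms ord_mat_mono[of M i j a b n] unfolding Gt_edge_def
  by (meson of_nat_le_iff order_trans)

lemma outer_product_graph_Gt_edge:
  fixes x :: "nat \<Rightarrow> real"
  assumes l: "1 \<le> l" "l < n"
    and mono: "\<And>i j. 1 \<le> i \<Longrightarrow> i \<le> j \<Longrightarrow> j \<le> n \<Longrightarrow> x i \<le> x j"
    and sign: "x l < 0" "0 \<le> x (l + 1)"
  shows "outer_product_graph (Gt_edge (\<lambda>i j. x i * x j) n t) n l"
proof -
  let ?E = "Gt_edge (\<lambda>i j. x i * x j) n t"
  have neg: "x i < 0" if "1 \<le> i" "i \<le> l" for i
    using mono[of i l] that l sign by linarith
  have pos: "0 \<le> x j" if "l < j" "j \<le> n" for j
    using mono[of "l + 1" j] that sign by linarith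
  have V: "i \<in> {1..n}" "j \<in> {1..n}" "i \<noteq> j" if "?E i j" for i j
    using that by (simp_all add: Gt_edge_def)
  note le = Gt_edge_if_le[where M = "\<lambda>i j. x i * x j"]
  show ?thesis
  proof
    show "?E j i" if "?E i j" for i j
      using V[OF that] by (intro le[OF that]) (auto simp: mult.commute)
    show "?E 1 j \<and> ?E i n" if e: "?E i j" "i \<le> l" "l < j" for i j
      using V[OF e(1)] e l mono[of 1 i] mono[of j n] neg[of i] pos[of j]
      by (auto intro!: le[OF e(1)] mult_right_mono mult_left_mono_neg)
    show "?E i j" if e: "?E a b" "a \<le> l \<longleftrightarrow> b \<le> l" "1 \<le> i" "i \<le> l" "l < j" "j \<le> n" for a b i j
    proof (rule le[OF e(1)])
      have "0 \<le> x a * x b"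
        using V[OF e(1)] e(2) neg[of a] neg[of b] pos[of a] pos[of b]
        by (cases "a \<le> l") (auto simp: zero_le_mult_iff)
      then show "x i * x j \<le> x a * x b"
        using neg[of i] pos[of j] e by (smt (verit) mult_nonpos_nonneg)
    qed (use e l in auto)
    show "?E l b" if e: "?E a b" "a \<le> l" "b \<le> l" "b \<noteq> l" for a b
      using V[OF e(1)] e l mono[of a l] neg[of b]
      by (auto intro!: le[OF e(1)] mult_right_mono_neg)
    show "?E (l + 1) b" if e: "?E a b" "l < a" "l < b" "b \<noteq> l + 1" for a b
      using V[OF e(1)] e l mono[of "l + 1" a] pos[of b]
      by (auto intro!: le[OF e(1)] mult_right_mono)
  qed (use l V in auto)
qed

theorem theorem2:
  fixes x :: "nat \<Rightarrow> real" and n l :: nat and K :: "'k::field itself"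
  defines "M \<equiv> (\<lambda>i j. x i * x j)"
  assumes "n \<ge> 2" and "1 \<le> l" and "l \<le> n - 1"
    and "\<forall>i j. 1 \<le> i \<and> i \<le> j \<and> j \<le> n \<longrightarrow> x i \<le> x j"
    and "x l < 0" and "0 \<le> x (l + 1)"
    and "offdiag_distinct M n"
  shows "\<forall>t \<in> {0..1}.
      betti_curve K M n 1 t \<le> (l - 1) * (n - l - 1)
    \<and> ((\<forall>i j. Gt_edge M n t i j \<longleftrightarrow>
           (i \<in> {1..n} \<and> j \<in> {1..n} \<and> (i \<le> l \<longleftrightarrow> l < j)))
         \<longrightarrow> betti_curve K M n 1 t = (l - 1) * (n - l - 1))
    \<and> (\<forall>k > 1. betti_curve K M n k t = 0)"
proof -
  have "outer_product_graph (Gt_edge M n t) n l" for t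
    unfolding M_def using assms(2-7) by (intro outer_product_graph_Gt_edge) auto
  then show ?thesis
    unfolding betti_curve_def
    using outer_product_graph.betti1_le[where K = K] outer_product_graph.betti1_complete_bipartite[where K = K]
      outer_product_graph.betti_eq_0_if_gt_1[where K = K]
    by blast
qed

end
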